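(* Let $(\mathcal X,\mathcal B,\pi)$ be a measure space with $\pi$ $\sigma$-finite, $r:\mathcal X\to\mathbb R$ measurable, $\{\varepsilon(x)\}$ a real-valued random field with i.i.d. copies $\varepsilon_1,\dots,\varepsilon_K$, $K$ a finite integer $\ge2$, and $p\in\mathcal P_\pi$. Let $X_1,\dots,X_K$ be i.i.d. with density $p$, independent of the noise, and let $\widehat X=X_I$ be the Plackett–Luce curated sample. Then for every measurable $f$ with $\mathbb E_{X\sim p}|f(X)|<\infty$, $$\mathbb E[f(\widehat X)]=\mathbb E_{X\sim p}\bigl[f(X)H^K_p(X)\bigr].$$ Consequently, the density of $\widehat X$ w.r.t. $\pi$ is $pH^K_p$.
   Context: $\mathcal P_\pi$ = probability densities w.r.t. $\pi$. Plackett–Luce curation: with $\tilde w_k=e^{r(X_k)+\varepsilon_k(X_k)}$, the index $I\in\{1,\dots,K\}$ is drawn with $\mathbb P(I=k\mid X_{1:K},\varepsilon_{1:K})=\tilde w_k/\sum_{i=1}^K\tilde w_i$. The choice kernel is $H^K_p(x):=\mathbb E\bigl[K e^{r(x)+\varepsilon(x)}/(e^{r(x)+\varepsilon(x)}+\sum_{k=1}^{K-1}e^{r(X_k)+\varepsilon_k(X_k)})\bigr]$ with $X_1,\dots,X_{K-1}$ i.i.d. with density $p$ and $\varepsilon,\varepsilon_1,\dots,\varepsilon_{K-1}$ i.i.d. copies of the noise field, all independent. *)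

theory Defs
  imports "HOL-Probability.Probability"
begin

definition prob_densities :: "'a measure \<Rightarrow> ('a \<Rightarrow> real) set" where
  "prob_densities M = {p. p \<in> borel_measurable M \<and> (\<forall>x\<in>space M. 0 \<le> p x)
      \<and> integrable M p \<and> integral\<^sup>L M p = 1}"

text \<open>Plackett--Luce weight exp(r(x) + eps(x)); the noise field is
  eps(x) = e u x with latent noise u drawn from the noise law N.\<close>
definition pl_weight :: "('a \<Rightarrow> real) \<Rightarrow> ('u \<Rightarrow> 'a \<Rightarrow> real) \<Rightarrow> 'u \<Rightarrow> 'a \<Rightarrow> real" where
  "pl_weight r e u x = exp (r x + e u x)"

text \<open>Choice kernel H^K_p(x): expectation over an independent copy eps of the noise,
  X_1..X_{K-1} i.i.d. with density p, and eps_1..eps_{K-1} i.i.d. noise copies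
  (indices 0..K-2).\<close>
definition choice_kernel ::
  "nat \<Rightarrow> 'a measure \<Rightarrow> 'u measure \<Rightarrow> ('a \<Rightarrow> real) \<Rightarrow> ('u \<Rightarrow> 'a \<Rightarrow> real)
     \<Rightarrow> ('a \<Rightarrow> real) \<Rightarrow> 'a \<Rightarrow> real" where
  "choice_kernel K M N r e p x =
     (\<integral>z. (case z of (u, xs, us) \<Rightarrow>
            real K * pl_weight r e u x /
              (pl_weight r e u x + (\<Sum>k<K - 1. pl_weight r e (us k) (xs k))))
       \<partial>(N \<Otimes>\<^sub>M (PiM {..<K - 1} (\<lambda>_. density M (\<lambda>y. ennreal (p y)))
                 \<Otimes>\<^sub>M PiM {..<K - 1} (\<lambda>_. N))))"

end

theory Submission
  imports Defs
begin

text \<open>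
  On the event \<open>I = k\<close> the curated sample is \<open>X\<^sub>k\<close>, and the Plackett--Luce rule gives
  \<open>P(I = k, X\<^sub>k \<in> A) = E[1\<^sub>A(X\<^sub>k) w\<^sub>k / (w\<^sub>1 + ... + w\<^sub>K)]\<close>.
  The \<open>K\<close> pairs (sample, noise) are i.i.d., so inserting a candidate \<open>(y, u)\<close> at position \<open>k\<close>
  among \<open>K - 1\<close> independent competitors reproduces their joint law. The expectation
  therefore equals \<open>\<integral>\<^sub>A H\<^sup>K\<^sub>p / K dQ\<close> with \<open>Q = p \<pi>\<close>, whatever \<open>k\<close> is, and summing over \<open>k\<close>
  shows that \<open>X\<^sub>I\<close> has density \<open>H\<^sup>K\<^sub>p\<close> with respect to \<open>Q\<close>.
\<close>

lemma distr_interchange_pair_measure: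
  assumes "sigma_finite_measure A" "sigma_finite_measure B"
    and "sigma_finite_measure C" "sigma_finite_measure D"
  shows "distr (A \<Otimes>\<^sub>M (B \<Otimes>\<^sub>M (C \<Otimes>\<^sub>M D))) ((A \<Otimes>\<^sub>M C) \<Otimes>\<^sub>M (B \<Otimes>\<^sub>M D))
           (\<lambda>(a, b, c, d). ((a, c), (b, d))) = (A \<Otimes>\<^sub>M C) \<Otimes>\<^sub>M (B \<Otimes>\<^sub>M D)"
    (is "distr ?ABCD _ ?swap = _")
proof (rule pair_measure_eqI[symmetric])
  interpret A: sigma_finite_measure A by fact
  interpret B: sigma_finite_measure B by fact
  interpret C: sigma_finite_measure C by fact
  interpret D: sigma_finite_measure D by fact
  interpret BC: pair_sigma_finite B C ..
  interpret CD: pair_sigma_finite C D ..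
  interpret BCD: pair_sigma_finite B "C \<Otimes>\<^sub>M D" ..
  show "sigma_finite_measure (A \<Otimes>\<^sub>M C)" "sigma_finite_measure (B \<Otimes>\<^sub>M D)"
    by (simp_all add: sigma_finite_pair_measure assms)
  show "sets ((A \<Otimes>\<^sub>M C) \<Otimes>\<^sub>M (B \<Otimes>\<^sub>M D)) = sets (distr ?ABCD ((A \<Otimes>\<^sub>M C) \<Otimes>\<^sub>M (B \<Otimes>\<^sub>M D)) ?swap)"
    by simp
  fix X Y assume [measurable]: "X \<in> sets (A \<Otimes>\<^sub>M C)" "Y \<in> sets (B \<Otimes>\<^sub>M D)"
  have "emeasure (distr ?ABCD ((A \<Otimes>\<^sub>M C) \<Otimes>\<^sub>M (B \<Otimes>\<^sub>M D)) ?swap) (X \<times> Y)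
      = (\<integral>\<^sup>+ z. indicator X (fst z, fst (snd (snd z))) * indicator Y (fst (snd z), snd (snd (snd z)))
          \<partial>?ABCD)"
    by (simp add: emeasure_distr nn_integral_indicator[symmetric] nn_integral_distr
        indicator_times split_beta')
  also have "\<dots> = (\<integral>\<^sup>+ a. \<integral>\<^sup>+ b. \<integral>\<^sup>+ c. \<integral>\<^sup>+ d. indicator X (a, c) * indicator Y (b, d)
      \<partial>D \<partial>C \<partial>B \<partial>A)"
    by (subst BCD.nn_integral_fst[symmetric], simp, intro nn_integral_cong,
        subst CD.nn_integral_fst[symmetric], simp, intro nn_integral_cong,
        subst D.nn_integral_fst[symmetric], simp_all)
  also have "\<dots> = (\<integral>\<^sup>+ a. \<integral>\<^sup>+ b. \<integral>\<^sup>+ c. indicator X (a, c) * \<integral>\<^sup>+ d. indicator Y (b, d)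
      \<partial>D \<partial>C \<partial>B \<partial>A)"
    by (intro nn_integral_cong nn_integral_cmult) simp
  also have "\<dots> = (\<integral>\<^sup>+ a. \<integral>\<^sup>+ c. \<integral>\<^sup>+ b. indicator X (a, c) * \<integral>\<^sup>+ d. indicator Y (b, d)
      \<partial>D \<partial>B \<partial>C \<partial>A)"
    by (rule nn_integral_cong, rule BC.Fubini'[symmetric]) simp
  also have "\<dots> = (\<integral>\<^sup>+ a. \<integral>\<^sup>+ c. indicator X (a, c) * emeasure (B \<Otimes>\<^sub>M D) Y \<partial>C \<partial>A)"
    by (intro nn_integral_cong, subst nn_integral_cmult)
       (simp_all add: D.nn_integral_fst nn_integral_indicator)
  also have "\<dots> = (\<integral>\<^sup>+ a. (\<integral>\<^sup>+ c. indicator X (a, c) \<partial>C) * emeasure (B \<Otimes>\<^sub>M D) Y \<partial>A)"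
    by (intro nn_integral_cong nn_integral_multc) simp
  also have "\<dots> = (\<integral>\<^sup>+ a. \<integral>\<^sup>+ c. indicator X (a, c) \<partial>C \<partial>A) * emeasure (B \<Otimes>\<^sub>M D) Y"
    by (rule nn_integral_multc) simp
  also have "\<dots> = emeasure (A \<Otimes>\<^sub>M C) X * emeasure (B \<Otimes>\<^sub>M D) Y"
    by (subst C.nn_integral_fst) (simp_all add: nn_integral_indicator)
  finally show "emeasure (A \<Otimes>\<^sub>M C) X * emeasure (B \<Otimes>\<^sub>M D) Y
      = emeasure (distr ?ABCD ((A \<Otimes>\<^sub>M C) \<Otimes>\<^sub>M (B \<Otimes>\<^sub>M D)) ?swap) (X \<times> Y)"
    by simp
qed

definition insert_at :: "nat \<Rightarrow> nat \<Rightarrow> 'b \<Rightarrow> (nat \<Rightarrow> 'b) \<Rightarrow> nat \<Rightarrow> 'b" where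
  "insert_at n k y xs = (\<lambda>j\<in>{..<Suc n}. if j = k then y else xs (if j < k then j else j - 1))"

lemma insert_at_same: "k \<le> n \<Longrightarrow> insert_at n k y xs k = y"
  by (simp add: insert_at_def)

lemma sum_insert_at:
  assumes "k \<le> n"
  shows "(\<Sum>i<Suc n. F (insert_at n k u us i) (insert_at n k y xs i)) = F u y + (\<Sum>i<n. F (us i) (xs i))"
proof -
  define g where "g i = (if i < k then i else Suc i)" for i
  have bij: "bij_betw g {..<n} ({..<Suc n} - {k})"
    using assms by (intro bij_betw_byWitness[where f' = "\<lambda>j. if j < k then j else j - 1"]) (auto simp: g_def)
  have "(\<Sum>i<Suc n. F (insert_at n k u us i) (insert_at n k y xs i))
      = F u y + (\<Sum>i\<in>{..<Suc n} - {k}. F (insert_at n k u us i) (insert_at n k y xs i))"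
    using assms by (subst sum.remove[of _ k]) (auto simp: insert_at_same)
  also have "(\<Sum>i\<in>{..<Suc n} - {k}. F (insert_at n k u us i) (insert_at n k y xs i))
      = (\<Sum>i<n. F (insert_at n k u us (g i)) (insert_at n k y xs (g i)))"
    by (rule sum.reindex_bij_betw[OF bij, symmetric])
  also have "\<dots> = (\<Sum>i<n. F (us i) (xs i))"
    by (rule sum.cong) (auto simp: insert_at_def g_def)
  finally show ?thesis .
qed

lemma measurable_insert_at:
  assumes "k \<le> n" and "f \<in> measurable T Q" and "g \<in> measurable T (PiM {..<n} (\<lambda>_. Q))"
  shows "(\<lambda>t. insert_at n k (f t) (g t)) \<in> measurable T (PiM {..<Suc n} (\<lambda>_. Q))"
proof -
  have "(\<lambda>t. if j = k then f t else g t (if j < k then j else j - 1)) \<in> measurable T Q"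
    if "j < Suc n" for j
    using that assms by (cases "j = k") auto
  then show ?thesis
    unfolding insert_at_def by (intro measurable_restrict) auto
qed

lemma distr_insert_at_PiM:
  assumes Q: "prob_space Q" and k: "k \<le> n"
  shows "distr (Q \<Otimes>\<^sub>M PiM {..<n} (\<lambda>_. Q)) (PiM {..<Suc n} (\<lambda>_. Q)) (\<lambda>(y, xs). insert_at n k y xs)
    = PiM {..<Suc n} (\<lambda>_. Q)"
proof -
  interpret Q: prob_space Q by fact
  define J where "J = {..<Suc n} - {k}"
  define shift where "shift j = (if j < k then j else j - 1)" for j :: nat
  define spread where "spread = (\<lambda>xs :: nat \<Rightarrow> 'a. \<lambda>j\<in>J. xs (shift j))"
  have J: "insert k J = {..<Suc n}"
    using k by (auto simp: J_def)
  have shift: "inj_on shift J" "shift \<in> J \<rightarrow> {..<n}"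
    using k by (auto simp: inj_on_def shift_def J_def split: if_splits)
  interpret PJ: prob_space "PiM J (\<lambda>_. Q)"
    by (intro prob_space_PiM Q)
  have spread_meas: "spread \<in> measurable (PiM {..<n} (\<lambda>_. Q)) (PiM J (\<lambda>_. Q))"
    using shift unfolding spread_def by (intro measurable_restrict measurable_component_singleton) auto
  have spread_distr: "distr (PiM {..<n} (\<lambda>_. Q)) (PiM J (\<lambda>_. Q)) spread = PiM J (\<lambda>_. Q)"
    using distr_PiM_reindex[of "{..<n}" "\<lambda>_. Q" shift J] shift Q by (simp add: spread_def)
  have "Q \<Otimes>\<^sub>M PiM J (\<lambda>_. Q) = distr Q Q (\<lambda>x. x) \<Otimes>\<^sub>M distr (PiM {..<n} (\<lambda>_. Q)) (PiM J (\<lambda>_. Q)) spread"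
    by (simp add: spread_distr)
  also have "\<dots> = distr (Q \<Otimes>\<^sub>M PiM {..<n} (\<lambda>_. Q)) (Q \<Otimes>\<^sub>M PiM J (\<lambda>_. Q)) (\<lambda>(x, xs). (x, spread xs))"
    by (intro pair_measure_distr spread_meas) (simp_all add: spread_distr PJ.sigma_finite_measure_axioms)
  finally have "PiM {..<Suc n} (\<lambda>_. Q) = distr (distr (Q \<Otimes>\<^sub>M PiM {..<n} (\<lambda>_. Q)) (Q \<Otimes>\<^sub>M PiM J (\<lambda>_. Q))
      (\<lambda>(x, xs). (x, spread xs))) (PiM {..<Suc n} (\<lambda>_. Q)) (\<lambda>(x, xs). xs(k := x))"
    using distr_pair_PiM_eq_PiM[of J "\<lambda>_. Q" k] Q J by simp
  also have "\<dots> = distr (Q \<Otimes>\<^sub>M PiM {..<n} (\<lambda>_. Q)) (PiM {..<Suc n} (\<lambda>_. Q))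
      (\<lambda>(y, xs). insert_at n k y xs)"
  proof (subst distr_distr)
    show "(\<lambda>(x, xs). xs(k := x)) \<in> measurable (Q \<Otimes>\<^sub>M PiM J (\<lambda>_. Q)) (PiM {..<Suc n} (\<lambda>_. Q))"
      unfolding case_prod_beta' by (rule measurable_fun_upd[where J = J]) (use J in auto)
    show "(\<lambda>(x, xs). (x, spread xs)) \<in> measurable (Q \<Otimes>\<^sub>M PiM {..<n} (\<lambda>_. Q)) (Q \<Otimes>\<^sub>M PiM J (\<lambda>_. Q))"
      using spread_meas by measurable
  qed (use k in \<open>auto intro!: distr_cong simp: insert_at_def J_def spread_def shift_def fun_eq_iff\<close>)
  finally show ?thesis ..
qed

lemma measurable_insert_at_pair:
  assumes "k \<le> n"
  shows "(\<lambda>(y, u, xs, us). (insert_at n k y xs, insert_at n k u us))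
    \<in> measurable (Q \<Otimes>\<^sub>M (N \<Otimes>\<^sub>M (PiM {..<n} (\<lambda>_. Q) \<Otimes>\<^sub>M PiM {..<n} (\<lambda>_. N))))
        (PiM {..<Suc n} (\<lambda>_. Q) \<Otimes>\<^sub>M PiM {..<Suc n} (\<lambda>_. N))"
  unfolding case_prod_beta' using assms by (intro measurable_Pair measurable_insert_at) auto

lemma distr_insert_at_pair_PiM:
  assumes Q: "prob_space Q" and N: "prob_space N" and k: "k \<le> n"
  shows "distr (Q \<Otimes>\<^sub>M (N \<Otimes>\<^sub>M (PiM {..<n} (\<lambda>_. Q) \<Otimes>\<^sub>M PiM {..<n} (\<lambda>_. N))))
      (PiM {..<Suc n} (\<lambda>_. Q) \<Otimes>\<^sub>M PiM {..<Suc n} (\<lambda>_. N))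
      (\<lambda>(y, u, xs, us). (insert_at n k y xs, insert_at n k u us))
    = PiM {..<Suc n} (\<lambda>_. Q) \<Otimes>\<^sub>M PiM {..<Suc n} (\<lambda>_. N)"
proof -
  let ?Qn = "PiM {..<n} (\<lambda>_. Q)" and ?Nn = "PiM {..<n} (\<lambda>_. N)"
    and ?QN = "PiM {..<Suc n} (\<lambda>_. Q) \<Otimes>\<^sub>M PiM {..<Suc n} (\<lambda>_. N)"
  have ins: "(\<lambda>(y, xs). insert_at n k y xs) \<in> measurable (R \<Otimes>\<^sub>M PiM {..<n} (\<lambda>_. R)) (PiM {..<Suc n} (\<lambda>_. R))"
    for R :: "'c measure"
    unfolding case_prod_beta' using k by (intro measurable_insert_at) auto
  have sf: "sigma_finite_measure Q" "sigma_finite_measure N"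
    "sigma_finite_measure ?Qn" "sigma_finite_measure ?Nn"
    "sigma_finite_measure (PiM {..<Suc n} (\<lambda>_. N))"
    using Q N by (simp_all add: prob_space_imp_sigma_finite prob_space_PiM)
  have "?QN = distr (Q \<Otimes>\<^sub>M ?Qn) (PiM {..<Suc n} (\<lambda>_. Q)) (\<lambda>(y, xs). insert_at n k y xs)
      \<Otimes>\<^sub>M distr (N \<Otimes>\<^sub>M ?Nn) (PiM {..<Suc n} (\<lambda>_. N)) (\<lambda>(y, xs). insert_at n k y xs)"
    by (simp only: distr_insert_at_PiM Q N k)
  also have "\<dots> = distr ((Q \<Otimes>\<^sub>M ?Qn) \<Otimes>\<^sub>M (N \<Otimes>\<^sub>M ?Nn)) ?QN
      (\<lambda>((y, xs), (u, us)). (insert_at n k y xs, insert_at n k u us))"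
  proof (rule pair_measure_distr[OF ins ins, THEN trans])
    show "sigma_finite_measure (distr (N \<Otimes>\<^sub>M ?Nn) (PiM {..<Suc n} (\<lambda>_. N)) (\<lambda>(y, xs). insert_at n k y xs))"
      by (simp only: distr_insert_at_PiM N k sf(5))
  qed (simp add: split_beta')
  also have "\<dots> = distr (distr (Q \<Otimes>\<^sub>M (N \<Otimes>\<^sub>M (?Qn \<Otimes>\<^sub>M ?Nn))) ((Q \<Otimes>\<^sub>M ?Qn) \<Otimes>\<^sub>M (N \<Otimes>\<^sub>M ?Nn))
          (\<lambda>(a, b, c, d). ((a, c), (b, d)))) ?QN
      (\<lambda>((y, xs), (u, us)). (insert_at n k y xs, insert_at n k u us))"
    by (simp only: distr_interchange_pair_measure sf)
  also have "\<dots> = distr (Q \<Otimes>\<^sub>M (N \<Otimes>\<^sub>M (?Qn \<Otimes>\<^sub>M ?Nn))) ?QN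
      (\<lambda>(y, u, xs, us). (insert_at n k y xs, insert_at n k u us))"
  proof (subst distr_distr)
    show "(\<lambda>((y, xs), (u, us)). (insert_at n k y xs, insert_at n k u us))
      \<in> measurable ((Q \<Otimes>\<^sub>M ?Qn) \<Otimes>\<^sub>M (N \<Otimes>\<^sub>M ?Nn)) ?QN"
      unfolding case_prod_beta' using k by (intro measurable_Pair measurable_insert_at) auto
  qed (auto intro!: distr_cong)
  finally show ?thesis ..
qed

lemma (in prob_space) distr_pair_eq_pair_measure_if_indep_set:
  assumes X: "X \<in> measurable M S" and Y: "Y \<in> measurable M T"
    and indep: "indep_set (sigma_sets (space M) {X -` A \<inter> space M | A. A \<in> sets S})
                   (sigma_sets (space M) {Y -` B \<inter> space M | B. B \<in> sets T})"
  shows "distr M (S \<Otimes>\<^sub>M T) (\<lambda>\<omega>. (X \<omega>, Y \<omega>)) = distr M S X \<Otimes>\<^sub>M distr M T Y"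
proof (rule pair_measure_eqI[symmetric])
  show "sigma_finite_measure (distr M S X)" "sigma_finite_measure (distr M T Y)"
    using X Y by (simp_all add: prob_space_imp_sigma_finite prob_space_distr)
  show "sets (distr M S X \<Otimes>\<^sub>M distr M T Y) = sets (distr M (S \<Otimes>\<^sub>M T) (\<lambda>\<omega>. (X \<omega>, Y \<omega>)))"
    unfolding sets_distr by (rule sets_pair_measure_cong) simp_all
  fix A B assume "A \<in> sets (distr M S X)" "B \<in> sets (distr M T Y)"
  then have A: "A \<in> sets S" and B: "B \<in> sets T" by auto
  have "(\<lambda>\<omega>. (X \<omega>, Y \<omega>)) -` (A \<times> B) \<inter> space M = (X -` A \<inter> space M) \<inter> (Y -` B \<inter> space M)"
    by blast
  then have "emeasure (distr M (S \<Otimes>\<^sub>M T) (\<lambda>\<omega>. (X \<omega>, Y \<omega>))) (A \<times> B)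
      = prob ((X -` A \<inter> space M) \<inter> (Y -` B \<inter> space M))"
    using emeasure_distr[OF measurable_Pair[OF X Y] pair_measureI[OF A B]]
    by (simp only: emeasure_eq_measure)
  also have "\<dots> = ennreal (prob (X -` A \<inter> space M) * prob (Y -` B \<inter> space M))"
    using A B by (subst indep_setD[OF indep]) (blast intro: sigma_sets.Basic)+
  finally show "emeasure (distr M S X) A * emeasure (distr M T Y) B
      = emeasure (distr M (S \<Otimes>\<^sub>M T) (\<lambda>\<omega>. (X \<omega>, Y \<omega>))) (A \<times> B)"
    by (simp only: emeasure_distr[OF X A] emeasure_distr[OF Y B] emeasure_eq_measure
        ennreal_mult measure_nonneg)
qed

lemma (in prob_space) distr_PiM_eq_PiM_if_iid:
  assumes "indep_vars (\<lambda>_. S) Y J" and "J \<noteq> {}"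
    and "\<And>j. j \<in> J \<Longrightarrow> Y j \<in> measurable M S" and "\<And>j. j \<in> J \<Longrightarrow> distr M S (Y j) = D"
  shows "distr M (PiM J (\<lambda>_. S)) (\<lambda>\<omega>. \<lambda>j\<in>J. Y j \<omega>) = PiM J (\<lambda>_. D)"
proof -
  have "distr M (PiM J (\<lambda>_. S)) (\<lambda>\<omega>. \<lambda>j\<in>J. Y j \<omega>) = PiM J (\<lambda>j. distr M S (Y j))"
    using assms by (subst (asm) indep_vars_iff_distr_eq_PiM') auto
  also have "\<dots> = PiM J (\<lambda>_. D)"
    by (rule PiM_cong) (simp_all add: assms(4))
  finally show ?thesis .
qed

locale plackett_luce_curation =
  P: prob_space P + N: prob_space N
  for P :: "'w measure" and N :: "'u measure" +
  fixes M :: "'a measure" and r :: "'a \<Rightarrow> real" and e :: "'u \<Rightarrow> 'a \<Rightarrow> real"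
    and p :: "'a \<Rightarrow> real" and K :: nat
    and X :: "nat \<Rightarrow> 'w \<Rightarrow> 'a" and U :: "nat \<Rightarrow> 'w \<Rightarrow> 'u" and I :: "'w \<Rightarrow> nat"
  assumes r_meas: "r \<in> borel_measurable M"
    and noise_field: "(\<lambda>(u, x). e u x) \<in> borel_measurable (N \<Otimes>\<^sub>M M)"
    and K_pos: "0 < K"
    and p_meas [measurable]: "p \<in> borel_measurable M"
    and X_rv: "\<And>k. k < K \<Longrightarrow> X k \<in> measurable P M"
    and X_distr: "\<And>k. k < K \<Longrightarrow> distributed P M (X k) (\<lambda>x. ennreal (p x))"
    and X_indep: "P.indep_vars (\<lambda>_. M) X {..<K}"
    and U_rv: "\<And>k. k < K \<Longrightarrow> U k \<in> measurable P N"
    and U_distr: "\<And>k. k < K \<Longrightarrow> distr P N (U k) = N"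
    and U_indep: "P.indep_vars (\<lambda>_. N) U {..<K}"
    and XU_indep: "P.indep_set
         (sigma_sets (space P) {(\<lambda>\<omega>. restrict (\<lambda>k. X k \<omega>) {..<K}) -` A \<inter> space P
                                  | A. A \<in> sets (PiM {..<K} (\<lambda>_. M))})
         (sigma_sets (space P) {(\<lambda>\<omega>. restrict (\<lambda>k. U k \<omega>) {..<K}) -` B \<inter> space P
                                  | B. B \<in> sets (PiM {..<K} (\<lambda>_. N))})"
    and I_rv: "I \<in> measurable P (count_space UNIV)"
    and I_range: "\<And>\<omega>. \<omega> \<in> space P \<Longrightarrow> I \<omega> < K"
    and I_cond: "\<And>k A. k < K \<Longrightarrow> A \<in> sets (PiM {..<K} (\<lambda>_. M) \<Otimes>\<^sub>M PiM {..<K} (\<lambda>_. N)) \<Longrightarrow>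
         measure P {\<omega> \<in> space P. I \<omega> = k \<and>
             (restrict (\<lambda>j. X j \<omega>) {..<K}, restrict (\<lambda>j. U j \<omega>) {..<K}) \<in> A}
         = (\<integral>\<omega>. indicator A (restrict (\<lambda>j. X j \<omega>) {..<K}, restrict (\<lambda>j. U j \<omega>) {..<K})
               * (pl_weight r e (U k \<omega>) (X k \<omega>)
                  / (\<Sum>i<K. pl_weight r e (U i \<omega>) (X i \<omega>))) \<partial>P)"
begin

definition Q :: "'a measure" where
  "Q = density M (\<lambda>x. ennreal (p x))"

lemma sets_Q [measurable_cong]: "sets Q = sets M" and space_Q: "space Q = space M"
  by (simp_all add: Q_def)

lemma sets_PiM_Q [measurable_cong]: "sets (PiM J (\<lambda>_. Q)) = sets (PiM J (\<lambda>_. M))"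
  by (rule sets_PiM_cong) (simp_all add: sets_Q)

lemma distr_X: "k < K \<Longrightarrow> distr P M (X k) = Q"
  using X_distr by (simp add: distributed_def Q_def)

sublocale Q: prob_space Q
  using P.prob_space_distr[OF X_rv[OF K_pos]] distr_X[OF K_pos] by simp

lemma measurable_pl_weight [measurable]:
  assumes [measurable]: "f \<in> measurable T N" "g \<in> measurable T M"
  shows "(\<lambda>t. pl_weight r e (f t) (g t)) \<in> borel_measurable T"
proof -
  have [measurable]: "(\<lambda>t. e (f t) (g t)) \<in> borel_measurable T"
    using measurable_compose[OF measurable_Pair[OF assms] noise_field] by simp
  show ?thesis
    using r_meas unfolding pl_weight_def by measurable
qed

definition draws :: "'w \<Rightarrow> (nat \<Rightarrow> 'a) \<times> (nat \<Rightarrow> 'u)" where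
  "draws \<omega> = (restrict (\<lambda>j. X j \<omega>) {..<K}, restrict (\<lambda>j. U j \<omega>) {..<K})"

lemma measurable_draws [measurable]:
  "draws \<in> measurable P (PiM {..<K} (\<lambda>_. Q) \<Otimes>\<^sub>M PiM {..<K} (\<lambda>_. N))"
  unfolding draws_def using X_rv U_rv by measurable

lemma distr_draws:
  "distr P (PiM {..<K} (\<lambda>_. Q) \<Otimes>\<^sub>M PiM {..<K} (\<lambda>_. N)) draws
    = PiM {..<K} (\<lambda>_. Q) \<Otimes>\<^sub>M PiM {..<K} (\<lambda>_. N)"
proof -
  have X: "distr P (PiM {..<K} (\<lambda>_. M)) (\<lambda>\<omega>. restrict (\<lambda>j. X j \<omega>) {..<K}) = PiM {..<K} (\<lambda>_. Q)"
    using K_pos X_rv distr_X by (intro P.distr_PiM_eq_PiM_if_iid X_indep) auto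
  have U: "distr P (PiM {..<K} (\<lambda>_. N)) (\<lambda>\<omega>. restrict (\<lambda>j. U j \<omega>) {..<K}) = PiM {..<K} (\<lambda>_. N)"
    using K_pos U_rv U_distr by (intro P.distr_PiM_eq_PiM_if_iid U_indep) auto
  have "distr P (PiM {..<K} (\<lambda>_. Q) \<Otimes>\<^sub>M PiM {..<K} (\<lambda>_. N)) draws
      = distr P (PiM {..<K} (\<lambda>_. M) \<Otimes>\<^sub>M PiM {..<K} (\<lambda>_. N)) draws"
    by (rule distr_cong) (simp_all add: sets_PiM_Q cong: sets_pair_measure_cong)
  also have "\<dots> = PiM {..<K} (\<lambda>_. Q) \<Otimes>\<^sub>M PiM {..<K} (\<lambda>_. N)"
    unfolding draws_def using X_rv U_rv
    by (subst P.distr_pair_eq_pair_measure_if_indep_set[OF _ _ XU_indep]) (simp_all add: X U)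
  finally show ?thesis .
qed

definition selection_prob :: "nat \<Rightarrow> (nat \<Rightarrow> 'a) \<times> (nat \<Rightarrow> 'u) \<Rightarrow> real" where
  "selection_prob k z = pl_weight r e (snd z k) (fst z k) / (\<Sum>i<K. pl_weight r e (snd z i) (fst z i))"

definition competitors :: "('u \<times> (nat \<Rightarrow> 'a) \<times> (nat \<Rightarrow> 'u)) measure" where
  "competitors = N \<Otimes>\<^sub>M (PiM {..<K - 1} (\<lambda>_. Q) \<Otimes>\<^sub>M PiM {..<K - 1} (\<lambda>_. N))"

definition win_prob :: "'a \<Rightarrow> 'u \<times> (nat \<Rightarrow> 'a) \<times> (nat \<Rightarrow> 'u) \<Rightarrow> real" where
  "win_prob x t = pl_weight r e (fst t) x
     / (pl_weight r e (fst t) x + (\<Sum>k<K - 1. pl_weight r e (snd (snd t) k) (fst (snd t) k)))"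

sublocale competitors: prob_space competitors
  unfolding competitors_def by (intro prob_space_pair prob_space_PiM Q.prob_space_axioms N.prob_space_axioms)

lemma win_prob_nonneg: "0 \<le> win_prob x t" and win_prob_le_1: "win_prob x t \<le> 1"
proof -
  have "0 \<le> (\<Sum>k<K - 1. pl_weight r e (snd (snd t) k) (fst (snd t) k))"
    by (intro sum_nonneg) (simp add: pl_weight_def)
  then show "0 \<le> win_prob x t" "win_prob x t \<le> 1"
    unfolding win_prob_def by (auto simp: pl_weight_def divide_le_eq_1 intro: add_pos_nonneg)
qed

lemma measurable_win_prob [measurable]: "(\<lambda>(x, t). win_prob x t) \<in> borel_measurable (Q \<Otimes>\<^sub>M competitors)"
  unfolding win_prob_def competitors_def case_prod_beta' by measurable

lemma choice_kernel_eq: "choice_kernel K M N r e p x = real K * (\<integral>t. win_prob x t \<partial>competitors)"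
  unfolding choice_kernel_def competitors_def win_prob_def Q_def
  by (subst integral_mult_right_zero[symmetric]) (simp add: case_prod_beta')

lemma choice_kernel_nonneg: "0 \<le> choice_kernel K M N r e p x"
  and choice_kernel_le: "choice_kernel K M N r e p x \<le> real K"
proof -
  have "(\<integral>t. win_prob x t \<partial>competitors) \<le> 1"
    using competitors.integral_le_const[of "win_prob x" 1]
    by (cases "integrable competitors (win_prob x)") (simp_all add: win_prob_le_1 not_integrable_integral_eq)
  then show "0 \<le> choice_kernel K M N r e p x" "choice_kernel K M N r e p x \<le> real K"
    by (simp_all add: choice_kernel_eq win_prob_nonneg mult_left_le)
qed

lemma measurable_choice_kernel [measurable]: "choice_kernel K M N r e p \<in> borel_measurable M"
proof -
  have "(\<lambda>x. real K * (\<integral>t. win_prob x t \<partial>competitors)) \<in> borel_measurable Q"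
    by measurable
  then show ?thesis
    by (simp add: choice_kernel_eq[abs_def] measurable_cong_sets[OF sets_Q refl])
qed

lemma selection_prob_insert_at:
  assumes "k < K"
  shows "selection_prob k (insert_at (K - 1) k y xs, insert_at (K - 1) k u us) = win_prob y (u, xs, us)"
proof -
  have "k \<le> K - 1" "Suc (K - 1) = K"
    using assms by simp_all
  then show ?thesis
    unfolding selection_prob_def win_prob_def
    using sum_insert_at[of k "K - 1" "\<lambda>u x. pl_weight r e u x" u us y xs]
    by (simp add: insert_at_same)
qed

lemma measurable_selection_prob:
  assumes "k < K"
  shows "selection_prob k \<in> borel_measurable (PiM {..<K} (\<lambda>_. Q) \<Otimes>\<^sub>M PiM {..<K} (\<lambda>_. N))"
proof -
  have [measurable]: "(\<lambda>z. pl_weight r e (snd z i) (fst z i))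
      \<in> borel_measurable (PiM {..<K} (\<lambda>_. Q) \<Otimes>\<^sub>M PiM {..<K} (\<lambda>_. N))" if "i < K" for i
    using that by (intro measurable_pl_weight) auto
  show ?thesis
    using assms unfolding selection_prob_def by measurable
qed

lemma measurable_indicator_times_selection_prob:
  assumes "k < K" and "A \<in> sets M"
  shows "(\<lambda>z. indicator A (fst z k) * selection_prob k z)
    \<in> borel_measurable (PiM {..<K} (\<lambda>_. Q) \<Otimes>\<^sub>M PiM {..<K} (\<lambda>_. N))"
  using assms by (intro borel_measurable_times measurable_selection_prob
      measurable_compose[OF _ borel_measurable_indicator, where N = Q]
      measurable_compose[OF measurable_fst measurable_component_singleton]) auto

lemma integral_selection_prob:
  assumes k: "k < K" and A: "A \<in> sets M"
  shows "(\<integral>z. indicator A (fst z k) * selection_prob k z \<partial>(PiM {..<K} (\<lambda>_. Q) \<Otimes>\<^sub>M PiM {..<K} (\<lambda>_. N)))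
    = (\<integral>x. indicator A x * choice_kernel K M N r e p x \<partial>Q) / real K"
proof -
  let ?draws = "PiM {..<K} (\<lambda>_. Q) \<Otimes>\<^sub>M PiM {..<K} (\<lambda>_. N)"
  let ?ins = "\<lambda>(y, u, xs, us). (insert_at (K - 1) k y xs, insert_at (K - 1) k u us)"
  have K: "k \<le> K - 1" "Suc (K - 1) = K"
    using k by simp_all
  have ins_meas: "?ins \<in> measurable (Q \<Otimes>\<^sub>M competitors) ?draws"
    using measurable_insert_at_pair[OF K(1), of Q N] K(2) unfolding competitors_def by simp
  have ins_distr: "distr (Q \<Otimes>\<^sub>M competitors) ?draws ?ins = ?draws"
    using distr_insert_at_pair_PiM[OF Q.prob_space_axioms N.prob_space_axioms K(1)] K(2)
    unfolding competitors_def by simp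
  interpret QC: pair_prob_space Q competitors ..
  have integrable: "integrable (Q \<Otimes>\<^sub>M competitors) (\<lambda>(x, t). indicator A x * win_prob x t)"
    using A by (intro QC.P.integrable_const_bound[where B = 1])
      (auto simp: win_prob_nonneg win_prob_le_1 abs_mult indicator_def)
  have "(\<integral>z. indicator A (fst z k) * selection_prob k z \<partial>?draws)
      = (\<integral>t. indicator A (fst (?ins t) k) * selection_prob k (?ins t) \<partial>(Q \<Otimes>\<^sub>M competitors))"
    by (subst ins_distr[symmetric]) (rule integral_distr[OF ins_meas measurable_indicator_times_selection_prob[OF k A]])
  also have "\<dots> = (\<integral>(x, t). indicator A x * win_prob x t \<partial>(Q \<Otimes>\<^sub>M competitors))"
    using selection_prob_insert_at[OF k] K(1) by (intro Bochner_Integration.integral_cong)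
      (auto simp: insert_at_same split: prod.splits)
  also have "\<dots> = (\<integral>x. (\<integral>t. indicator A x * win_prob x t \<partial>competitors) \<partial>Q)"
    using QC.integral_fst'[OF integrable] by simp
  also have "\<dots> = (\<integral>x. indicator A x * choice_kernel K M N r e p x / real K \<partial>Q)"
    using k by (simp add: choice_kernel_eq)
  finally show ?thesis
    by simp
qed

lemma prob_index_and_draw_in:
  assumes k: "k < K" and A: "A \<in> sets M"
  shows "measure P {\<omega> \<in> space P. I \<omega> = k \<and> X k \<omega> \<in> A}
    = (\<integral>x. indicator A x * choice_kernel K M N r e p x \<partial>Q) / real K"
proof -
  let ?Ak = "{z \<in> space (PiM {..<K} (\<lambda>_. M) \<Otimes>\<^sub>M PiM {..<K} (\<lambda>_. N)). fst z k \<in> A}"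
  have "(\<lambda>z. fst z k) \<in> measurable (PiM {..<K} (\<lambda>_. M) \<Otimes>\<^sub>M PiM {..<K} (\<lambda>_. N)) M"
    using k by (intro measurable_compose[OF measurable_fst measurable_component_singleton]) auto
  then have Ak: "?Ak \<in> sets (PiM {..<K} (\<lambda>_. M) \<Otimes>\<^sub>M PiM {..<K} (\<lambda>_. N))"
    using A by measurable
  have draws_space: "draws \<omega> \<in> space (PiM {..<K} (\<lambda>_. M) \<Otimes>\<^sub>M PiM {..<K} (\<lambda>_. N))" if "\<omega> \<in> space P" for \<omega>
    using measurable_space[OF measurable_draws that] by (simp add: space_pair_measure space_PiM space_Q)
  have "measure P {\<omega> \<in> space P. I \<omega> = k \<and> X k \<omega> \<in> A}
      = measure P {\<omega> \<in> space P. I \<omega> = k \<and> draws \<omega> \<in> ?Ak}"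
    using draws_space k by (intro arg_cong[where f = "measure P"]) (auto simp: draws_def)
  also have "\<dots> = (\<integral>\<omega>. indicator A (fst (draws \<omega>) k) * selection_prob k (draws \<omega>) \<partial>P)"
    using I_cond[OF k Ak] draws_space k unfolding draws_def
    by (auto intro!: Bochner_Integration.integral_cong simp: selection_prob_def indicator_def)
  also have "\<dots> = (\<integral>z. indicator A (fst z k) * selection_prob k z
      \<partial>distr P (PiM {..<K} (\<lambda>_. Q) \<Otimes>\<^sub>M PiM {..<K} (\<lambda>_. N)) draws)"
    by (rule integral_distr[symmetric, OF measurable_draws measurable_indicator_times_selection_prob[OF k A]])
  finally show ?thesis
    by (simp only: distr_draws integral_selection_prob[OF k A])
qed

lemma prob_curated_sample_in:
  assumes A: "A \<in> sets M"
  shows "measure P {\<omega> \<in> space P. X (I \<omega>) \<omega> \<in> A}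
    = (\<integral>x. indicator A x * choice_kernel K M N r e p x \<partial>Q)"
proof -
  let ?B = "\<lambda>k. {\<omega> \<in> space P. I \<omega> = k \<and> X k \<omega> \<in> A}"
  have B_sets: "?B k \<in> sets P" if "k < K" for k
  proof -
    have "?B k = (I -` {k} \<inter> space P) \<inter> (X k -` A \<inter> space P)"
      by blast
    then show ?thesis
      using measurable_sets[OF I_rv] measurable_sets[OF X_rv[OF that] A] by simp
  qed
  have "{\<omega> \<in> space P. X (I \<omega>) \<omega> \<in> A} = (\<Union>k<K. ?B k)"
    using I_range by auto
  then have "measure P {\<omega> \<in> space P. X (I \<omega>) \<omega> \<in> A} = (\<Sum>k<K. measure P (?B k))"
    using B_sets by (simp only:) (intro P.finite_measure_finite_Union, auto simp: disjoint_family_on_def)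
  also have "\<dots> = (\<integral>x. indicator A x * choice_kernel K M N r e p x \<partial>Q)"
    using K_pos A by (simp add: prob_index_and_draw_in)
  finally show ?thesis .
qed

lemma measurable_curated_sample: "(\<lambda>\<omega>. X (I \<omega>) \<omega>) \<in> measurable P M"
proof (rule measurable_compose_countable'[where f = X])
  show "I \<in> measurable P (count_space {..<K})"
    using I_range by (subst measurable_count_space_eq2) (auto intro: measurable_sets[OF I_rv])
qed (auto intro: X_rv)

lemma distr_curated_sample:
  "distr P M (\<lambda>\<omega>. X (I \<omega>) \<omega>) = density Q (\<lambda>x. ennreal (choice_kernel K M N r e p x))"
proof (rule measure_eqI)
  fix A assume "A \<in> sets (distr P M (\<lambda>\<omega>. X (I \<omega>) \<omega>))"
  then have A: "A \<in> sets M"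
    by simp
  have "integrable Q (\<lambda>x. indicator A x * choice_kernel K M N r e p x)"
    using A by (intro Q.integrable_const_bound[where B = "real K"])
      (auto simp: indicator_def choice_kernel_nonneg choice_kernel_le)
  then have "emeasure (distr P M (\<lambda>\<omega>. X (I \<omega>) \<omega>)) A
      = (\<integral>\<^sup>+ x. ennreal (indicator A x * choice_kernel K M N r e p x) \<partial>Q)"
    using A by (simp add: emeasure_distr measurable_curated_sample P.emeasure_eq_measure
        vimage_def Int_def conj_commute prob_curated_sample_in nn_integral_eq_integral choice_kernel_nonneg)
  also have "\<dots> = emeasure (density Q (\<lambda>x. ennreal (choice_kernel K M N r e p x))) A"
    using A by (simp add: emeasure_density sets_Q ennreal_mult'' ennreal_indicator
        choice_kernel_nonneg mult.commute)
  finally show "emeasure (distr P M (\<lambda>\<omega>. X (I \<omega>) \<omega>)) A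
      = emeasure (density Q (\<lambda>x. ennreal (choice_kernel K M N r e p x))) A" .
qed (simp add: sets_Q)

lemma distributed_curated_sample:
  "distributed P M (\<lambda>\<omega>. X (I \<omega>) \<omega>) (\<lambda>x. ennreal (p x * choice_kernel K M N r e p x))"
proof -
  have "density M (\<lambda>x. ennreal (p x * choice_kernel K M N r e p x))
      = density Q (\<lambda>x. ennreal (choice_kernel K M N r e p x))"
    unfolding Q_def by (subst density_density_eq) (simp_all add: ennreal_mult'' choice_kernel_nonneg)
  then show ?thesis
    unfolding distributed_def by (simp add: distr_curated_sample measurable_curated_sample)
qed

lemma integral_curated_sample:
  assumes f: "f \<in> borel_measurable M" and f_int: "integrable Q f"
  shows "integrable P (\<lambda>\<omega>. f (X (I \<omega>) \<omega>))"
    and "(\<integral>\<omega>. f (X (I \<omega>) \<omega>) \<partial>P) = (\<integral>x. f x * choice_kernel K M N r e p x \<partial>Q)"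
proof -
  let ?H = "choice_kernel K M N r e p"
  have fQ: "f \<in> borel_measurable Q"
    using f by (simp add: measurable_cong_sets[OF sets_Q refl])
  have H_meas: "?H \<in> borel_measurable Q"
    by (simp add: measurable_cong_sets[OF sets_Q refl])
  have H_nonneg: "AE x in Q. 0 \<le> ?H x"
    by (simp add: choice_kernel_nonneg)
  have "integrable Q (\<lambda>x. ?H x *\<^sub>R f x)"
  proof (rule Bochner_Integration.integrable_bound[OF integrable_mult_right[OF f_int, of "real K"]])
    show "AE x in Q. norm (?H x *\<^sub>R f x) \<le> norm (real K * f x)"
      by (simp add: abs_mult choice_kernel_nonneg choice_kernel_le mult_right_mono)
  qed (use fQ H_meas in simp)
  then have "integrable (distr P M (\<lambda>\<omega>. X (I \<omega>) \<omega>)) f"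
    by (simp add: distr_curated_sample integrable_density[OF fQ H_meas H_nonneg])
  then show "integrable P (\<lambda>\<omega>. f (X (I \<omega>) \<omega>))"
    by (simp add: integrable_distr_eq[OF measurable_curated_sample f])
  have "(\<integral>\<omega>. f (X (I \<omega>) \<omega>) \<partial>P) = (\<integral>x. f x \<partial>distr P M (\<lambda>\<omega>. X (I \<omega>) \<omega>))"
    by (rule integral_distr[symmetric, OF measurable_curated_sample f])
  also have "\<dots> = (\<integral>x. ?H x *\<^sub>R f x \<partial>Q)"
    unfolding distr_curated_sample by (rule integral_density[OF fQ H_meas H_nonneg])
  finally show "(\<integral>\<omega>. f (X (I \<omega>) \<omega>) \<partial>P) = (\<integral>x. f x * ?H x \<partial>Q)"
    by (simp add: mult.commute)
qed

end

theorem lemma1: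
  fixes M :: "'a measure" and N :: "'u measure" and P :: "'w measure"
    and r :: "'a \<Rightarrow> real" and e :: "'u \<Rightarrow> 'a \<Rightarrow> real" and p :: "'a \<Rightarrow> real"
    and K :: nat
    and X :: "nat \<Rightarrow> 'w \<Rightarrow> 'a" and U :: "nat \<Rightarrow> 'w \<Rightarrow> 'u" and I :: "'w \<Rightarrow> nat"
  assumes sf: "sigma_finite_measure M"
    and r_meas: "r \<in> borel_measurable M"
    and noise_law: "prob_space N"
    and noise_field: "(\<lambda>(u, x). e u x) \<in> borel_measurable (N \<Otimes>\<^sub>M M)"
    and K2: "2 \<le> K"
    and p_dens: "p \<in> prob_densities M"
    and P: "prob_space P"
    and X_rv: "\<And>k. k < K \<Longrightarrow> X k \<in> measurable P M"
    and X_distr: "\<And>k. k < K \<Longrightarrow> distributed P M (X k) (\<lambda>x. ennreal (p x))"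
    and X_indep: "prob_space.indep_vars P (\<lambda>_. M) X {..<K}"
    and U_rv: "\<And>k. k < K \<Longrightarrow> U k \<in> measurable P N"
    and U_distr: "\<And>k. k < K \<Longrightarrow> distr P N (U k) = N"
    and U_indep: "prob_space.indep_vars P (\<lambda>_. N) U {..<K}"
    and XU_indep: "prob_space.indep_set P
         (sigma_sets (space P) {(\<lambda>\<omega>. restrict (\<lambda>k. X k \<omega>) {..<K}) -` A \<inter> space P
                                  | A. A \<in> sets (PiM {..<K} (\<lambda>_. M))})
         (sigma_sets (space P) {(\<lambda>\<omega>. restrict (\<lambda>k. U k \<omega>) {..<K}) -` B \<inter> space P
                                  | B. B \<in> sets (PiM {..<K} (\<lambda>_. N))})"
    and I_rv: "I \<in> measurable P (count_space UNIV)"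
    and I_range: "\<And>\<omega>. \<omega> \<in> space P \<Longrightarrow> I \<omega> < K"
    and I_cond: "\<And>k A. k < K \<Longrightarrow> A \<in> sets (PiM {..<K} (\<lambda>_. M) \<Otimes>\<^sub>M PiM {..<K} (\<lambda>_. N)) \<Longrightarrow>
         measure P {\<omega> \<in> space P. I \<omega> = k \<and>
             (restrict (\<lambda>j. X j \<omega>) {..<K}, restrict (\<lambda>j. U j \<omega>) {..<K}) \<in> A}
         = (\<integral>\<omega>. indicator A (restrict (\<lambda>j. X j \<omega>) {..<K}, restrict (\<lambda>j. U j \<omega>) {..<K})
               * (pl_weight r e (U k \<omega>) (X k \<omega>)
                  / (\<Sum>i<K. pl_weight r e (U i \<omega>) (X i \<omega>))) \<partial>P)"
  shows "(\<forall>f. f \<in> borel_measurable M \<longrightarrow> integrable (density M (\<lambda>x. ennreal (p x))) f \<longrightarrow>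
            integrable P (\<lambda>\<omega>. f (X (I \<omega>) \<omega>)) \<and>
            (\<integral>\<omega>. f (X (I \<omega>) \<omega>) \<partial>P)
              = (\<integral>x. f x * choice_kernel K M N r e p x \<partial>(density M (\<lambda>x. ennreal (p x)))))
         \<and> distributed P M (\<lambda>\<omega>. X (I \<omega>) \<omega>)
              (\<lambda>x. ennreal (p x * choice_kernel K M N r e p x))"
proof -
  have "0 < K" "p \<in> borel_measurable M"
    using K2 p_dens by (simp_all add: prob_densities_def)
  then interpret plackett_luce_curation P N M r e p K X U I
    by (intro plackett_luce_curation.intro plackett_luce_curation_axioms.intro P noise_law r_meas
        noise_field X_rv X_distr X_indep U_rv U_distr U_indep XU_indep I_rv I_range I_cond)
  show ?thesis
    using integral_curated_sample distributed_curated_sample unfolding Q_def by blast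
qed

end
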